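(* Let $V$ be a diagonal $l$-qubit unitary in the third level $\mathcal{C}^{(3)}$ of the Clifford hierarchy and let $|V\rangle=V|+\rangle^{\otimes l}$. Let $S_V=\langle VX_iV^{\dagger}: i\in[l]\rangle$ be the group generated by the operators $VX_iV^\dagger$, and define the twirling map $$\mathcal{T}_V(\rho)=\frac{1}{|S_V|}\sum_{s\in S_V}s\rho s^{\dagger}.$$ Then for any quantum channel $\mathcal{E}$ on $l$ qubits, $$\mathcal{T}_V\circ\mathcal{E}(|V\rangle\langle V|)=\sum_{x\in\mathbb{F}_2^l}p_x\,Z_x|V\rangle\langle V|Z_x^{\dagger}$$ for some probability distribution $\{p_x\}_{x\in\mathbb{F}_2^l}$, where $Z_x=\bigotimes_{i=1}^l Z_i^{x_i}$.
   Context: The $l$-qubit Pauli group $\mathcal{P}_l$ consists of tensor products of $I,X,Y,Z$ times a phase in $\{\pm1,\pm i\}$. The Clifford hierarchy: $\mathcal{C}^{(1)}=\mathcal{P}_l$ and $\mathcal{C}^{(k)}=\{W\in U(2^l): WPW^\dagger\in\mathcal{C}^{(k-1)}\ \forall P\in\mathcal{P}_l\}$ for $k\ge2$. $X_i,Z_i$ denote the Pauli $X,Z$ on qubit $i$, and $|+\rangle=(|0\rangle+|1\rangle)/\sqrt2$. *)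

theory Defs
  imports "Jordan_Normal_Form.Matrix"
begin

text \<open>An l-qubit operator is a complex matrix of size 2^l x 2^l. Basis state |a> (a < 2^l)
  has qubit i in state bit i of a (bitval a i).\<close>

definition bitval :: "nat \<Rightarrow> nat \<Rightarrow> nat" where
  "bitval a i = (a div 2 ^ i) mod 2"

definition dag :: "complex mat \<Rightarrow> complex mat" where
  "dag A = mat (dim_col A) (dim_row A) (\<lambda>(i, j). cnj (A $$ (j, i)))"

definition unitary_mat :: "nat \<Rightarrow> complex mat \<Rightarrow> bool" where
  "unitary_mat n W \<longleftrightarrow> W \<in> carrier_mat n n \<and> W * dag W = 1\<^sub>m n \<and> dag W * W = 1\<^sub>m n"

definition msum :: "nat \<Rightarrow> ('x \<Rightarrow> complex mat) \<Rightarrow> 'x set \<Rightarrow> complex mat" where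
  "msum n f A = mat n n (\<lambda>(a, b). \<Sum>x\<in>A. f x $$ (a, b))"

definition msum_list :: "nat \<Rightarrow> complex mat list \<Rightarrow> complex mat" where
  "msum_list n Ms = mat n n (\<lambda>(a, b). \<Sum>M\<leftarrow>Ms. M $$ (a, b))"

definition pI :: "complex mat" where "pI = mat_of_rows_list 2 [[1, 0], [0, 1]]"
definition pX :: "complex mat" where "pX = mat_of_rows_list 2 [[0, 1], [1, 0]]"
definition pY :: "complex mat" where "pY = mat_of_rows_list 2 [[0, -\<i>], [\<i>, 0]]"
definition pZ :: "complex mat" where "pZ = mat_of_rows_list 2 [[1, 0], [0, -1]]"

definition tensor :: "nat \<Rightarrow> (nat \<Rightarrow> complex mat) \<Rightarrow> complex mat" where
  "tensor l Ps = mat (2 ^ l) (2 ^ l) (\<lambda>(a, b). \<Prod>i<l. Ps i $$ (bitval a i, bitval b i))"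

definition Xq :: "nat \<Rightarrow> nat \<Rightarrow> complex mat" where
  "Xq l i = tensor l (\<lambda>j. if j = i then pX else pI)"

definition Zq :: "nat \<Rightarrow> nat \<Rightarrow> complex mat" where
  "Zq l i = tensor l (\<lambda>j. if j = i then pZ else pI)"

definition Zvec :: "nat \<Rightarrow> (nat \<Rightarrow> bool) \<Rightarrow> complex mat" where
  "Zvec l x = tensor l (\<lambda>j. if x j then pZ else pI)"

definition F2 :: "nat \<Rightarrow> (nat \<Rightarrow> bool) set" where
  "F2 l = {x. \<forall>i. l \<le> i \<longrightarrow> \<not> x i}"

definition pauli_group :: "nat \<Rightarrow> complex mat set" where
  "pauli_group l = {c \<cdot>\<^sub>m tensor l Ps | c Ps.
      c \<in> {1, -1, \<i>, -\<i>} \<and> (\<forall>i<l. Ps i \<in> {pI, pX, pY, pZ})}"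

fun clifford :: "nat \<Rightarrow> nat \<Rightarrow> complex mat set" where
  "clifford l 0 = {}"
| "clifford l (Suc 0) = pauli_group l"
| "clifford l (Suc (Suc k)) =
     {W. unitary_mat (2 ^ l) W \<and> (\<forall>P\<in>pauli_group l. W * P * dag W \<in> clifford l (Suc k))}"

text \<open>Subgroup of the unitary group generated by a set G of n x n unitaries
  (the inverse of a unitary is its adjoint).\<close>
inductive_set gen_group :: "nat \<Rightarrow> complex mat set \<Rightarrow> complex mat set"
  for n :: nat and G :: "complex mat set" where
  gen_one: "1\<^sub>m n \<in> gen_group n G"
| gen_base: "g \<in> G \<Longrightarrow> g \<in> gen_group n G"
| gen_mult: "a \<in> gen_group n G \<Longrightarrow> b \<in> gen_group n G \<Longrightarrow> a * b \<in> gen_group n G"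
| gen_inv: "a \<in> gen_group n G \<Longrightarrow> dag a \<in> gen_group n G"

definition twirl :: "nat \<Rightarrow> complex mat set \<Rightarrow> complex mat \<Rightarrow> complex mat" where
  "twirl n S \<rho> = (1 / of_nat (card S)) \<cdot>\<^sub>m msum n (\<lambda>s. s * \<rho> * dag s) S"

definition plus_state :: "nat \<Rightarrow> complex vec" where
  "plus_state l = vec (2 ^ l) (\<lambda>_. complex_of_real (1 / sqrt (2 ^ l)))"

definition ketbra :: "complex vec \<Rightarrow> complex mat" where
  "ketbra v = mat (dim_vec v) (dim_vec v) (\<lambda>(a, b). v $ a * cnj (v $ b))"

definition quantum_channel :: "nat \<Rightarrow> (complex mat \<Rightarrow> complex mat) \<Rightarrow> bool" where
  "quantum_channel l E \<longleftrightarrow> (\<exists>Ks. (\<forall>K\<in>set Ks. K \<in> carrier_mat (2 ^ l) (2 ^ l)) \<and>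
      msum_list (2 ^ l) (map (\<lambda>K. dag K * K) Ks) = 1\<^sub>m (2 ^ l) \<and>
      (\<forall>\<rho>\<in>carrier_mat (2 ^ l) (2 ^ l). E \<rho> = msum_list (2 ^ l) (map (\<lambda>K. K * \<rho> * dag K) Ks)))"

end

theory Submission
  imports Defs
begin

(* For diagonal V, the operators V X_y V^dag (y in F_2^l) form an abelian group S_V of order 2^l,
   all of whose elements fix |V> = V|+>^l.  The vectors w_x = Z_x|V> form an orthonormal basis of
   joint eigenvectors of S_V with pairwise distinct characters y |-> (-1)^(x.y), so averaging
   over S_V removes every off-diagonal term in that basis:
     T_V(rho) = sum_x <w_x|rho|w_x> |w_x><w_x|.
   For rho = E(|V><V|) the weights p_x = <w_x|rho|w_x> are nonnegative, since rho is a sum of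
   rank-one Kraus terms, and they add up to tr rho = 1. *)

lemma bit_less_power2: "(a::nat) < 2 ^ l \<Longrightarrow> bit a i \<Longrightarrow> i < l"
  by (metis bit_take_bit_iff take_bit_nat_eq_self)

lemma eq_if_bits_below_power2:
  fixes a b :: nat
  assumes "a < 2 ^ l" "b < 2 ^ l" "\<And>i. i < l \<Longrightarrow> bit a i = bit b i"
  shows "a = b"
  by (rule bit_eqI) (metis assms bit_less_power2)

lemma xor_less_power2: "(a::nat) < 2 ^ l \<Longrightarrow> b < 2 ^ l \<Longrightarrow> xor a b < 2 ^ l"
  by (metis take_bit_nat_eq_self take_bit_xor take_bit_nat_less_exp)

lemma xor_cancel_left [simp]: "xor (a::nat) (xor a b) = b"
  by (simp flip: xor.assoc)

lemma xor_cancel_right [simp]: "xor (xor (a::nat) b) b = a"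
  by (simp add: xor.assoc)

lemma eq_xor_commute: "(a::nat) = xor b c \<longleftrightarrow> b = xor a c"
  by auto

lemma xor_eq_0_iff: "xor (a::nat) b = 0 \<longleftrightarrow> a = b"
  by (metis xor_cancel_left xor.right_neutral xor_self_eq)

lemma sum_reindex_xor:
  assumes "(a::nat) < 2 ^ l"
  shows "(\<Sum>y<2 ^ l. f y) = (\<Sum>y<2 ^ l. f (xor a y))"
  by (rule sum.reindex_bij_witness[where i = "xor a" and j = "xor a"])
    (use assms in \<open>auto simp: xor_less_power2\<close>)

lemma xor_top_bit:
  fixes y :: nat
  assumes "y < 2 ^ Suc k" "\<not> y < 2 ^ k"
  shows "y - 2 ^ k < 2 ^ k" "xor (y - 2 ^ k) (2 ^ k) = y"
proof -
  show lt: "y - 2 ^ k < 2 ^ k"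
    using assms by simp
  have "y = (y - 2 ^ k) + 2 ^ k"
    using assms by simp
  also have "\<dots> = xor (y - 2 ^ k) (2 ^ k)"
    by (rule disjunctive_add_eq_xor, rule bit_eqI)
      (use bit_less_power2[OF lt] in \<open>auto simp: bit_and_iff bit_exp_iff\<close>)
  finally show "xor (y - 2 ^ k) (2 ^ k) = y" ..
qed

lemma bitval_of_bool: "bitval a i = of_bool (bit a i)"
  by (simp add: bitval_def bit_iff_odd of_bool_odd_eq_mod_2)

lemma prod_if_zero:
  "(\<Prod>j<(l::nat). if P j then g j else (0::'a::comm_semiring_1))
    = (if \<forall>j<l. P j then \<Prod>j<l. g j else 0)"
  by (induction l) (auto simp: less_Suc_eq)

lemma pI_bitval: "pI $$ (bitval a i, bitval b i) = of_bool (bit a i = bit b i)"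
  by (simp add: pI_def bitval_of_bool mat_of_rows_list_def)

lemma pX_bitval: "pX $$ (bitval a i, bitval b i) = of_bool (bit a i \<noteq> bit b i)"
  by (simp add: pX_def bitval_of_bool mat_of_rows_list_def)

lemma pZ_bitval:
  "pZ $$ (bitval a i, bitval b i) = (if bit a i = bit b i then if bit a i then -1 else 1 else 0)"
  by (simp add: pZ_def bitval_of_bool mat_of_rows_list_def)

lemma Xq_index:
  assumes "i < l" "a < 2 ^ l" "b < 2 ^ l"
  shows "Xq l i $$ (a, b) = of_bool (b = xor a (2 ^ i))"
proof -
  have "Xq l i $$ (a, b) = (\<Prod>j<l. if bit b j = (bit a j \<noteq> (j = i)) then 1 else 0)"
    using assms unfolding Xq_def tensor_def by (auto intro!: prod.cong simp: pX_bitval pI_bitval)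
  also have "\<dots> = of_bool (\<forall>j<l. bit b j = (bit a j \<noteq> (j = i)))"
    by (simp add: prod_if_zero)
  also have "(\<forall>j<l. bit b j = (bit a j \<noteq> (j = i))) \<longleftrightarrow> b = xor a (2 ^ i)"
  proof
    assume "\<forall>j<l. bit b j = (bit a j \<noteq> (j = i))"
    moreover have "xor a (2 ^ i) < 2 ^ l"
      using assms by (simp add: xor_less_power2)
    ultimately show "b = xor a (2 ^ i)"
      using assms by (intro eq_if_bits_below_power2[where l = l]) (auto simp: bit_xor_iff bit_exp_iff)
  qed (auto simp: bit_xor_iff bit_exp_iff)
  finally show ?thesis .
qed

text \<open>\<open>chi l x\<close> is the character \<open>a \<mapsto> (-1)\<^sup>x\<^sup>\<cdot>\<^sup>a\<close> of \<open>F\<^sub>2\<^sup>l\<close>; it is the diagonal of \<open>Z\<^sub>x\<close>.\<close>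

definition chi :: "nat \<Rightarrow> (nat \<Rightarrow> bool) \<Rightarrow> nat \<Rightarrow> complex" where
  "chi l x a = (\<Prod>i<l. if x i \<and> bit a i then -1 else 1)"

lemma Zvec_index:
  assumes "a < 2 ^ l" "b < 2 ^ l"
  shows "Zvec l x $$ (a, b) = (if a = b then chi l x a else 0)"
proof -
  have "Zvec l x $$ (a, b)
      = (\<Prod>j<l. if bit a j = bit b j then if x j \<and> bit a j then -1 else 1 else 0)"
    using assms unfolding Zvec_def tensor_def by (auto intro!: prod.cong simp: pZ_bitval pI_bitval)
  also have "\<dots> = (if \<forall>j<l. bit a j = bit b j then chi l x a else 0)"
    by (simp only: prod_if_zero chi_def)
  also have "(\<forall>j<l. bit a j = bit b j) \<longleftrightarrow> a = b"
    using eq_if_bits_below_power2 assms by blast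
  finally show ?thesis .
qed

lemma Zvec_carrier: "Zvec l x \<in> carrier_mat (2 ^ l) (2 ^ l)"
  by (simp add: Zvec_def tensor_def)

lemma diagonal_Zvec: "diagonal_mat (Zvec l x)"
  using Zvec_carrier[of l x] by (auto simp: diagonal_mat_def Zvec_index)

section \<open>Characters of \<open>F\<^sub>2\<^sup>l\<close>\<close>

lemma sum_F2_Suc: "(\<Sum>x\<in>F2 (Suc l). g x) = (\<Sum>x\<in>F2 l. g (x(l := False)) + g (x(l := True)))"
proof -
  have "(\<Sum>x\<in>F2 (Suc l). g x) = (\<Sum>(x, t)\<in>F2 l \<times> UNIV. g (x(l := t)))"
    by (rule sum.reindex_bij_witness
        [where i = "\<lambda>(x, t). x(l := t)" and j = "\<lambda>x. (x(l := False), x l)"])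
      (auto simp: F2_def le_Suc_eq fun_eq_iff)
  also have "\<dots> = (\<Sum>x\<in>F2 l. g (x(l := False)) + g (x(l := True)))"
    by (simp add: sum.cartesian_product[symmetric] UNIV_bool add.commute)
  finally show ?thesis .
qed

lemma sum_F2_prod:
  fixes f :: "nat \<Rightarrow> bool \<Rightarrow> 'a::comm_semiring_1"
  shows "(\<Sum>x\<in>F2 l. \<Prod>i<l. f i (x i)) = (\<Prod>i<l. f i False + f i True)"
proof (induction l)
  case 0
  have "F2 0 = {\<lambda>_. False}"
    by (auto simp: F2_def)
  then show ?case by simp
next
  case (Suc l)
  have "(\<Prod>i<Suc l. f i ((x(l := t)) i)) = (\<Prod>i<l. f i (x i)) * f l t" for x t
    by (simp add: prod.lessThan_Suc)
  then show ?case
    by (simp add: sum_F2_Suc Suc.IH sum.distrib prod.lessThan_Suc distrib_left flip: sum_distrib_right)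
qed

lemma sum_chi:
  assumes "y < 2 ^ l"
  shows "(\<Sum>x\<in>F2 l. chi l x y) = (if y = 0 then 2 ^ l else 0)"
proof -
  have "(\<Sum>x\<in>F2 l. chi l x y)
      = (\<Prod>i<l. (if False \<and> bit y i then -1 else 1) + (if True \<and> bit y i then -1 else 1))"
    unfolding chi_def by (rule sum_F2_prod)
  also have "\<dots> = (\<Prod>i<l. if \<not> bit y i then 2 else 0)"
    by (intro prod.cong) auto
  also have "\<dots> = (if \<forall>i<l. \<not> bit y i then 2 ^ l else 0)"
    by (simp add: prod_if_zero)
  also have "(\<forall>i<l. \<not> bit y i) \<longleftrightarrow> y = 0"
    using eq_if_bits_below_power2[OF assms, of 0] by auto
  finally show ?thesis .
qed

lemma chi_mult: "chi l x a * chi l x b = chi l x (xor a b)"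
  unfolding chi_def prod.distrib[symmetric] by (rule prod.cong) (auto simp: bit_xor_iff)

lemma cnj_chi: "cnj (chi l x a) = chi l x a"
  unfolding chi_def by (induction l) auto

lemma sum_chi4:
  assumes "a < 2 ^ l" "b < 2 ^ l" "c < 2 ^ l" "d < 2 ^ l"
  shows "(\<Sum>x\<in>F2 l. chi l x a * chi l x b * chi l x c * chi l x d)
       = (if d = xor a (xor b c) then 2 ^ l else 0)"
proof -
  have "(\<Sum>x\<in>F2 l. chi l x a * chi l x b * chi l x c * chi l x d)
      = (\<Sum>x\<in>F2 l. chi l x (xor (xor (xor a b) c) d))"
    by (simp add: chi_mult)
  also have "\<dots> = (if xor (xor (xor a b) c) d = 0 then 2 ^ l else 0)"
    using assms by (intro sum_chi) (simp add: xor_less_power2)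
  also have "xor (xor (xor a b) c) d = 0 \<longleftrightarrow> d = xor a (xor b c)"
    by (metis xor_eq_0_iff xor.assoc)
  finally show ?thesis .
qed

lemma index_mult_mat_sum:
  assumes "A \<in> carrier_mat n m" "B \<in> carrier_mat m k" "a < n" "b < k"
  shows "(A * B) $$ (a, b) = (\<Sum>c<m. A $$ (a, c) * B $$ (c, b))"
  using assms by (simp add: scalar_prod_def lessThan_atLeast0)

lemma index_mult_mat_vec_sum:
  assumes "A \<in> carrier_mat n m" "u \<in> carrier_vec m" "a < n"
  shows "(A *\<^sub>v u) $ a = (\<Sum>c<m. A $$ (a, c) * u $ c)"
  using assms by (simp add: scalar_prod_def lessThan_atLeast0)

lemma dim_dag [simp]: "dim_row (dag A) = dim_col A" "dim_col (dag A) = dim_row A"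
  by (simp_all add: dag_def)

lemma index_dag [simp]:
  "a < dim_col A \<Longrightarrow> b < dim_row A \<Longrightarrow> dag A $$ (a, b) = cnj (A $$ (b, a))"
  by (simp add: dag_def)

lemma dag_carrier: "A \<in> carrier_mat n m \<Longrightarrow> dag A \<in> carrier_mat m n"
  by auto

lemma diagonal_dag: "diagonal_mat D \<Longrightarrow> diagonal_mat (dag D)"
  by (simp add: diagonal_mat_def)

lemma diagonal_mult_index_left:
  assumes "diagonal_mat D" "D \<in> carrier_mat n n" "M \<in> carrier_mat n m" "a < n" "b < m"
  shows "(D * M) $$ (a, b) = D $$ (a, a) * M $$ (a, b)"
proof -
  have "(D * M) $$ (a, b) = (\<Sum>c<n. D $$ (a, c) * M $$ (c, b))"
    using assms(2-5) by (rule index_mult_mat_sum)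
  also have "\<dots> = (\<Sum>c<n. if c = a then D $$ (a, a) * M $$ (a, b) else 0)"
    using assms(1,2,4) by (intro sum.cong) (auto simp: diagonal_mat_def)
  finally show ?thesis using assms(4) by simp
qed

lemma diagonal_mult_index_right:
  assumes "diagonal_mat D" "D \<in> carrier_mat n n" "M \<in> carrier_mat m n" "a < m" "b < n"
  shows "(M * D) $$ (a, b) = M $$ (a, b) * D $$ (b, b)"
proof -
  have "(M * D) $$ (a, b) = (\<Sum>c<n. M $$ (a, c) * D $$ (c, b))"
    using assms(3,2,4,5) by (rule index_mult_mat_sum)
  also have "\<dots> = (\<Sum>c<n. if c = b then M $$ (a, b) * D $$ (b, b) else 0)"
    using assms(1,2,5) by (intro sum.cong) (auto simp: diagonal_mat_def)
  finally show ?thesis using assms(5) by simp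
qed

lemma diagonal_mult_vec_index:
  assumes "diagonal_mat D" "D \<in> carrier_mat n n" "u \<in> carrier_vec n" "a < n"
  shows "(D *\<^sub>v u) $ a = D $$ (a, a) * u $ a"
proof -
  have "(D *\<^sub>v u) $ a = (\<Sum>c<n. D $$ (a, c) * u $ c)"
    using assms(2-4) by (rule index_mult_mat_vec_sum)
  also have "\<dots> = (\<Sum>c<n. if c = a then D $$ (a, a) * u $ a else 0)"
    using assms(1,2,4) by (intro sum.cong) (auto simp: diagonal_mat_def)
  finally show ?thesis using assms(4) by simp
qed

lemma ketbra_carrier: "u \<in> carrier_vec n \<Longrightarrow> ketbra u \<in> carrier_mat n n"
  by (simp add: ketbra_def)

lemma dim_ketbra [simp]: "dim_row (ketbra u) = dim_vec u" "dim_col (ketbra u) = dim_vec u"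
  by (simp_all add: ketbra_def)

lemma index_ketbra [simp]:
  "a < dim_vec u \<Longrightarrow> b < dim_vec u \<Longrightarrow> ketbra u $$ (a, b) = u $ a * cnj (u $ b)"
  by (simp add: ketbra_def)

lemma sandwich_ketbra:
  assumes A: "A \<in> carrier_mat m n" and u: "u \<in> carrier_vec n"
  shows "A * ketbra u * dag A = ketbra (A *\<^sub>v u)"
proof (rule eq_matI)
  fix a b assume "a < dim_row (ketbra (A *\<^sub>v u))" "b < dim_col (ketbra (A *\<^sub>v u))"
  then have ab: "a < m" "b < m"
    using A by (auto simp: ketbra_def)
  have Au: "(A *\<^sub>v u) $ a' = (\<Sum>c<n. A $$ (a', c) * u $ c)" if "a' < m" for a'
    using A u that by (rule index_mult_mat_vec_sum)
  have AP: "A * ketbra u \<in> carrier_mat m n"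
    using A u by (simp add: ketbra_carrier)
  have APd: "(A * ketbra u) $$ (a, d) = (A *\<^sub>v u) $ a * cnj (u $ d)" if "d < n" for d
  proof -
    have "(A * ketbra u) $$ (a, d) = (\<Sum>c<n. A $$ (a, c) * ketbra u $$ (c, d))"
      using A ketbra_carrier[OF u] ab(1) that by (rule index_mult_mat_sum)
    then show ?thesis
      using u that by (simp add: Au[OF ab(1)] sum_distrib_right mult.assoc)
  qed
  have "(A * ketbra u * dag A) $$ (a, b) = (\<Sum>d<n. (A * ketbra u) $$ (a, d) * dag A $$ (d, b))"
    using AP dag_carrier[OF A] ab by (rule index_mult_mat_sum)
  also have "\<dots> = (\<Sum>d<n. (A *\<^sub>v u) $ a * (cnj (A $$ (b, d)) * cnj (u $ d)))"
    using A ab by (intro sum.cong) (auto simp: APd)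
  also have "\<dots> = (A *\<^sub>v u) $ a * cnj ((A *\<^sub>v u) $ b)"
    by (simp add: Au[OF ab(2)] sum_distrib_left)
  finally show "(A * ketbra u * dag A) $$ (a, b) = ketbra (A *\<^sub>v u) $$ (a, b)"
    using A ab by simp
qed (use A in \<open>auto simp: ketbra_def\<close>)

lemma index_msum [simp]:
  "a < n \<Longrightarrow> b < n \<Longrightarrow> msum n f A $$ (a, b) = (\<Sum>x\<in>A. f x $$ (a, b))"
  by (simp add: msum_def)

lemma dim_msum [simp]: "dim_row (msum n f A) = n" "dim_col (msum n f A) = n"
  by (simp_all add: msum_def)

lemma msum_cong: "(\<And>x. x \<in> A \<Longrightarrow> f x = g x) \<Longrightarrow> msum n f A = msum n g A"
  by (simp add: msum_def)

lemma msum_list_map: "msum_list n (map f xs) = msum n (\<lambda>k. f (xs ! k)) {..<length xs}"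
  by (simp add: msum_list_def msum_def sum_list_sum_nth atLeast0LessThan)

definition quad_form :: "complex mat \<Rightarrow> complex vec \<Rightarrow> complex" where
  "quad_form \<rho> w = (\<Sum>a<dim_vec w. \<Sum>b<dim_vec w. cnj (w $ a) * \<rho> $$ (a, b) * w $ b)"

lemma quad_form_msum:
  assumes "w \<in> carrier_vec n"
  shows "quad_form (msum n f A) w = (\<Sum>x\<in>A. quad_form (f x) w)"
proof -
  have "quad_form (msum n f A) w = (\<Sum>a<n. \<Sum>b<n. \<Sum>x\<in>A. cnj (w $ a) * f x $$ (a, b) * w $ b)"
    using assms by (simp add: quad_form_def sum_distrib_left sum_distrib_right)
  also have "\<dots> = (\<Sum>a<n. \<Sum>x\<in>A. \<Sum>b<n. cnj (w $ a) * f x $$ (a, b) * w $ b)"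
    by (intro sum.cong refl) (rule sum.swap)
  also have "\<dots> = (\<Sum>x\<in>A. quad_form (f x) w)"
    using assms unfolding quad_form_def by (subst sum.swap) simp
  finally show ?thesis .
qed

lemma quad_form_ketbra:
  assumes "dim_vec u = dim_vec w"
  shows "quad_form (ketbra u) w = complex_of_real ((cmod (\<Sum>a<dim_vec w. cnj (w $ a) * u $ a))\<^sup>2)"
proof -
  let ?s = "\<Sum>a<dim_vec w. cnj (w $ a) * u $ a"
  have "quad_form (ketbra u) w = ?s * cnj ?s"
    using assms by (simp add: quad_form_def sum_product mult_ac)
  then show ?thesis by (simp only: complex_norm_square)
qed

definition mtrace :: "complex mat \<Rightarrow> complex" where
  "mtrace A = (\<Sum>a<dim_row A. A $$ (a, a))"

lemma mtrace_sandwich: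
  assumes K: "K \<in> carrier_mat n n" and \<rho>: "\<rho> \<in> carrier_mat n n"
  shows "mtrace (K * \<rho> * dag K) = (\<Sum>c<n. \<Sum>d<n. \<rho> $$ (c, d) * (dag K * K) $$ (d, c))"
proof -
  have K\<rho>: "K * \<rho> \<in> carrier_mat n n"
    using K \<rho> by simp
  have "mtrace (K * \<rho> * dag K) = (\<Sum>a<n. \<Sum>d<n. (K * \<rho>) $$ (a, d) * cnj (K $$ (a, d)))"
    using K unfolding mtrace_def
    by (intro sum.cong) (auto simp: carrier_matD[OF K] index_mult_mat_sum[OF K\<rho> dag_carrier[OF K]]
        simp del: index_mult_mat(1))
  also have "\<dots> = (\<Sum>a<n. \<Sum>d<n. \<Sum>c<n. K $$ (a, c) * \<rho> $$ (c, d) * cnj (K $$ (a, d)))"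
    by (simp add: index_mult_mat_sum[OF K \<rho>] sum_distrib_right del: index_mult_mat(1))
  also have "\<dots> = (\<Sum>a<n. \<Sum>c<n. \<Sum>d<n. K $$ (a, c) * \<rho> $$ (c, d) * cnj (K $$ (a, d)))"
    by (rule sum.cong[OF refl], rule sum.swap)
  also have "\<dots> = (\<Sum>c<n. \<Sum>a<n. \<Sum>d<n. K $$ (a, c) * \<rho> $$ (c, d) * cnj (K $$ (a, d)))"
    by (rule sum.swap)
  also have "\<dots> = (\<Sum>c<n. \<Sum>d<n. \<Sum>a<n. K $$ (a, c) * \<rho> $$ (c, d) * cnj (K $$ (a, d)))"
    by (rule sum.cong[OF refl], rule sum.swap)
  also have "\<dots> = (\<Sum>c<n. \<Sum>d<n. \<rho> $$ (c, d) * (dag K * K) $$ (d, c))"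
    by (simp add: index_mult_mat_sum[OF dag_carrier[OF K] K] carrier_matD[OF K] sum_distrib_left mult_ac
        del: index_mult_mat(1))
  finally show ?thesis .
qed

lemma quantum_channel_carrier:
  assumes "quantum_channel l E" "\<rho> \<in> carrier_mat (2 ^ l) (2 ^ l)"
  shows "E \<rho> \<in> carrier_mat (2 ^ l) (2 ^ l)"
  using assms by (auto simp: quantum_channel_def msum_list_def)

lemma quantum_channel_trace:
  assumes "quantum_channel l E" and \<rho>: "\<rho> \<in> carrier_mat (2 ^ l) (2 ^ l)"
  shows "mtrace (E \<rho>) = mtrace \<rho>"
proof -
  let ?n = "2 ^ l :: nat"
  obtain Ks where Ks: "\<forall>K\<in>set Ks. K \<in> carrier_mat ?n ?n"
    and complete: "msum_list ?n (map (\<lambda>K. dag K * K) Ks) = 1\<^sub>m ?n"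
    and E: "E \<rho> = msum_list ?n (map (\<lambda>K. K * \<rho> * dag K) Ks)"
    using assms unfolding quantum_channel_def by blast
  have complete_index: "(\<Sum>k<length Ks. (dag (Ks ! k) * Ks ! k) $$ (d, c)) = (if d = c then 1 else 0)"
    if "c < ?n" "d < ?n" for c d
    using arg_cong[OF complete, of "\<lambda>M. M $$ (d, c)"] that by (simp add: msum_list_map)
  have Kk: "Ks ! k \<in> carrier_mat ?n ?n" if "k < length Ks" for k
    using Ks that by simp
  have "mtrace (E \<rho>) = (\<Sum>a<?n. \<Sum>k<length Ks. (Ks ! k * \<rho> * dag (Ks ! k)) $$ (a, a))"
    by (simp add: E msum_list_map mtrace_def msum_def)
  also have "\<dots> = (\<Sum>k<length Ks. mtrace (Ks ! k * \<rho> * dag (Ks ! k)))"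
    unfolding mtrace_def
    by (subst sum.swap, rule sum.cong) (simp_all add: Kk[THEN carrier_matD(1)] del: index_mult_mat(1))
  also have "\<dots> = (\<Sum>k<length Ks. \<Sum>c<?n. \<Sum>d<?n.
                      \<rho> $$ (c, d) * (dag (Ks ! k) * Ks ! k) $$ (d, c))"
    by (rule sum.cong[OF refl]) (simp add: mtrace_sandwich[OF Kk \<rho>])
  also have "\<dots> = (\<Sum>c<?n. \<Sum>d<?n. \<Sum>k<length Ks.
                      \<rho> $$ (c, d) * (dag (Ks ! k) * Ks ! k) $$ (d, c))"
    by (subst sum.swap) (rule sum.cong[OF refl], rule sum.swap)
  also have "\<dots> = mtrace \<rho>"
    using \<rho> by (simp add: complete_index mtrace_def carrier_matD if_distrib flip: sum_distrib_left cong: if_cong)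
  finally show ?thesis .
qed

lemma quantum_channel_pure_quad_form_nonneg:
  assumes "quantum_channel l E" and u: "u \<in> carrier_vec (2 ^ l)" and w: "w \<in> carrier_vec (2 ^ l)"
  shows "\<exists>r\<ge>0. quad_form (E (ketbra u)) w = complex_of_real r"
proof -
  let ?n = "2 ^ l :: nat"
  obtain Ks where Ks: "\<forall>K\<in>set Ks. K \<in> carrier_mat ?n ?n"
    and E: "\<forall>\<rho>\<in>carrier_mat ?n ?n. E \<rho> = msum_list ?n (map (\<lambda>K. K * \<rho> * dag K) Ks)"
    using assms(1) unfolding quantum_channel_def by blast
  have Kk: "Ks ! k \<in> carrier_mat ?n ?n" if "k < length Ks" for k
    using Ks that by simp
  have "E (ketbra u) = msum ?n (\<lambda>k. ketbra (Ks ! k *\<^sub>v u)) {..<length Ks}"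
    using u by (simp add: E ketbra_carrier msum_list_map) (rule msum_cong, simp add: sandwich_ketbra[OF Kk u])
  then have "quad_form (E (ketbra u)) w
      = complex_of_real (\<Sum>k<length Ks. (cmod (\<Sum>a<?n. cnj (w $ a) * (Ks ! k *\<^sub>v u) $ a))\<^sup>2)"
    using u w by (simp add: quad_form_msum quad_form_ketbra Kk[THEN carrier_matD(1)])
  then show ?thesis by (meson sum_nonneg zero_le_power2)
qed

section \<open>The group generated by the \<open>V X\<^sub>i V\<^sup>\<dagger>\<close>\<close>

locale diagonal_unitary =
  fixes l :: nat and V :: "complex mat"
  assumes unitary: "unitary_mat (2 ^ l) V" and diagonal: "diagonal_mat V"
begin

abbreviation n :: nat where "n \<equiv> 2 ^ l"

definition v :: "nat \<Rightarrow> complex" where "v a = V $$ (a, a)"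

lemma V_carrier: "V \<in> carrier_mat n n"
  using unitary by (simp add: unitary_mat_def)

lemma cnj_v_mult_v: "a < n \<Longrightarrow> cnj (v a) * v a = 1"
proof -
  assume a: "a < n"
  have "(dag V * V) $$ (a, a) = 1"
    using unitary a by (simp add: unitary_mat_def)
  moreover have "(dag V * V) $$ (a, a) = dag V $$ (a, a) * V $$ (a, a)"
    using diagonal_dag[OF diagonal] dag_carrier[OF V_carrier] V_carrier a a
    by (rule diagonal_mult_index_left)
  ultimately show ?thesis
    using a V_carrier by (simp add: v_def)
qed

text \<open>\<open>conj_shift y\<close> is \<open>V X\<^sub>y V\<^sup>\<dagger>\<close>, where \<open>X\<^sub>y\<close> permutes the basis by \<open>a \<mapsto> a \<oplus> y\<close>.\<close>

definition conj_shift :: "nat \<Rightarrow> complex mat" where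
  "conj_shift y = mat n n (\<lambda>(a, b). if b = xor a y then v a * cnj (v b) else 0)"

lemma conj_shift_carrier: "conj_shift y \<in> carrier_mat n n"
  by (simp add: conj_shift_def)

lemma conj_shift_generator: "i < l \<Longrightarrow> V * Xq l i * dag V = conj_shift (2 ^ i)"
proof (rule eq_matI)
  fix a b assume i: "i < l" and "a < dim_row (conj_shift (2 ^ i))" "b < dim_col (conj_shift (2 ^ i))"
  then have ab: "a < n" "b < n"
    by (auto simp: conj_shift_def)
  have X: "Xq l i \<in> carrier_mat n n"
    by (simp add: Xq_def tensor_def)
  have "(V * Xq l i * dag V) $$ (a, b) = (V * Xq l i) $$ (a, b) * dag V $$ (b, b)"
    using diagonal_dag[OF diagonal] dag_carrier[OF V_carrier] _ ab
    by (rule diagonal_mult_index_right) (use V_carrier X in simp)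
  also have "(V * Xq l i) $$ (a, b) = V $$ (a, a) * Xq l i $$ (a, b)"
    using diagonal V_carrier X ab by (rule diagonal_mult_index_left)
  finally show "(V * Xq l i * dag V) $$ (a, b) = conj_shift (2 ^ i) $$ (a, b)"
    using ab i V_carrier by (simp add: Xq_index conj_shift_def v_def)
qed (use V_carrier in \<open>auto simp: conj_shift_def Xq_def tensor_def\<close>)

lemma conj_shift_0: "conj_shift 0 = 1\<^sub>m n"
proof (rule eq_matI)
  fix a b assume "a < dim_row (1\<^sub>m n)" "b < dim_col (1\<^sub>m n)"
  then show "conj_shift 0 $$ (a, b) = 1\<^sub>m n $$ (a, b)"
    using cnj_v_mult_v[of a] by (auto simp: conj_shift_def mult.commute)
qed (simp_all add: conj_shift_def)

lemma dag_conj_shift: "dag (conj_shift y) = conj_shift y"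
  by (rule eq_matI) (auto simp: conj_shift_def eq_xor_commute)

lemma conj_shift_mult_index_left:
  assumes "M \<in> carrier_mat n n" "a < n" "b < n" "y < n"
  shows "(conj_shift y * M) $$ (a, b) = v a * cnj (v (xor a y)) * M $$ (xor a y, b)"
proof -
  have "(conj_shift y * M) $$ (a, b) = (\<Sum>c<n. conj_shift y $$ (a, c) * M $$ (c, b))"
    using conj_shift_carrier assms(1-3) by (rule index_mult_mat_sum)
  also have "\<dots> = (\<Sum>c<n. if c = xor a y then v a * cnj (v c) * M $$ (c, b) else 0)"
    using assms by (intro sum.cong) (auto simp: conj_shift_def)
  finally show ?thesis
    using assms by (simp add: xor_less_power2)
qed

lemma conj_shift_mult_index_right:
  assumes "M \<in> carrier_mat n n" "a < n" "b < n" "y < n"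
  shows "(M * conj_shift y) $$ (a, b) = M $$ (a, xor b y) * v (xor b y) * cnj (v b)"
proof -
  have "(M * conj_shift y) $$ (a, b) = (\<Sum>c<n. M $$ (a, c) * conj_shift y $$ (c, b))"
    using assms(1) conj_shift_carrier assms(2,3) by (rule index_mult_mat_sum)
  also have "\<dots> = (\<Sum>c<n. if c = xor b y then M $$ (a, c) * (v c * cnj (v b)) else 0)"
    using assms by (intro sum.cong) (auto simp: conj_shift_def eq_xor_commute)
  finally show ?thesis
    using assms by (simp add: xor_less_power2 mult.assoc)
qed

lemma conj_shift_mult:
  assumes "y < n" "z < n"
  shows "conj_shift y * conj_shift z = conj_shift (xor y z)"
proof (rule eq_matI)
  fix a b assume "a < dim_row (conj_shift (xor y z))" "b < dim_col (conj_shift (xor y z))"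
  then have ab: "a < n" "b < n"
    by (simp_all add: conj_shift_def)
  let ?c = "xor a y"
  have c: "?c < n"
    using ab assms by (simp add: xor_less_power2)
  have "(conj_shift y * conj_shift z) $$ (a, b) = v a * cnj (v ?c) * conj_shift z $$ (?c, b)"
    using conj_shift_carrier ab assms(1) by (rule conj_shift_mult_index_left)
  also have "\<dots> = (if b = xor a (xor y z) then v a * cnj (v b) * (cnj (v ?c) * v ?c) else 0)"
    using ab c by (simp add: conj_shift_def xor.assoc mult_ac)
  finally show "(conj_shift y * conj_shift z) $$ (a, b) = conj_shift (xor y z) $$ (a, b)"
    using ab c by (simp add: cnj_v_mult_v conj_shift_def)
qed (simp_all add: conj_shift_def)

abbreviation generators :: "complex mat set" where
  "generators \<equiv> {V * Xq l i * dag V | i. i < l}"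

lemma gen_group_subset: "gen_group n generators \<subseteq> conj_shift ` {..<n}"
proof
  fix g assume "g \<in> gen_group n generators"
  then show "g \<in> conj_shift ` {..<n}"
  proof (induction rule: gen_group.induct)
    case gen_one
    show ?case
      by (rule image_eqI[where x = 0]) (simp_all add: conj_shift_0)
  next
    case (gen_base g)
    then obtain i where "i < l" "g = V * Xq l i * dag V"
      by blast
    then show ?case
      by (simp add: conj_shift_generator)
  next
    case (gen_mult g h)
    then obtain y z where "y < n" "z < n" "g = conj_shift y" "h = conj_shift z"
      by blast
    then show ?case
      by (simp add: conj_shift_mult xor_less_power2)
  next
    case (gen_inv g)
    then show ?case
      using dag_conj_shift by auto
  qed
qed

lemma conj_shift_in_gen_group:
  "k \<le> l \<Longrightarrow> y < 2 ^ k \<Longrightarrow> conj_shift y \<in> gen_group n generators"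
proof (induction k arbitrary: y)
  case 0
  then show ?case
    using conj_shift_0 gen_group.gen_one by simp
next
  case (Suc k)
  show ?case
  proof (cases "y < 2 ^ k")
    case True
    then show ?thesis
      using Suc by simp
  next
    case False
    note top = xor_top_bit[OF Suc.prems(2) False]
    have "k < l"
      using Suc.prems(1) by simp
    have lt: "y - 2 ^ k < n" "(2::nat) ^ k < n"
      using top(1) \<open>k < l\<close> power_strict_increasing[of k l "2::nat"] by linarith+
    have "conj_shift (y - 2 ^ k) \<in> gen_group n generators"
      using Suc top by simp
    moreover have "conj_shift (2 ^ k) \<in> gen_group n generators"
    proof (rule gen_group.gen_base)
      have "V * Xq l k * dag V \<in> generators"
        using \<open>k < l\<close> by blast
      then show "conj_shift (2 ^ k) \<in> generators"
        by (simp only: conj_shift_generator[OF \<open>k < l\<close>])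
    qed
    moreover have "conj_shift y = conj_shift (y - 2 ^ k) * conj_shift (2 ^ k)"
      using conj_shift_mult[OF lt] top(2) by simp
    ultimately show ?thesis
      by (simp add: gen_group.gen_mult)
  qed
qed

lemma gen_group_eq: "gen_group n generators = conj_shift ` {..<n}"
  using gen_group_subset conj_shift_in_gen_group[of l] by auto

lemma inj_on_conj_shift: "inj_on conj_shift {..<n}"
proof (rule inj_onI)
  fix y z assume y: "y \<in> {..<n}" and z: "z \<in> {..<n}" and eq: "conj_shift y = conj_shift z"
  have "conj_shift y $$ (0, y) \<noteq> 0"
    using y cnj_v_mult_v[of 0] cnj_v_mult_v[of y] by (auto simp: conj_shift_def)
  then have "conj_shift z $$ (0, y) \<noteq> 0"
    using eq by simp
  then show "y = z"
    using y by (auto simp: conj_shift_def split: if_split_asm)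
qed

lemma card_gen_group: "card (gen_group n generators) = n"
  by (simp add: gen_group_eq card_image inj_on_conj_shift)

end

section \<open>Twirling over \<open>S\<^sub>V\<close> dephases in the basis \<open>Z\<^sub>x |V\<rangle>\<close>\<close>

context diagonal_unitary
begin

definition amp :: complex where "amp = complex_of_real (1 / sqrt (2 ^ l))"

lemma cnj_amp: "cnj amp = amp"
  by (simp add: amp_def)

lemma amp_mult_amp: "amp * amp = 1 / of_nat n"
proof -
  have "sqrt (2 ^ l) * sqrt (2 ^ l) = (2::real) ^ l"
    by simp
  then show ?thesis
    unfolding amp_def by (simp flip: of_real_mult)
qed

definition state :: "complex vec" where "state = V *\<^sub>v plus_state l"

lemma state_carrier: "state \<in> carrier_vec n"
  unfolding state_def by (rule mult_mat_vec_carrier[OF V_carrier]) (simp add: plus_state_def)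

lemma state_index: "a < n \<Longrightarrow> state $ a = amp * v a"
  using diagonal_mult_vec_index[OF diagonal V_carrier, of "plus_state l" a]
  by (simp add: state_def plus_state_def amp_def v_def mult.commute)

lemma mtrace_ketbra_state: "mtrace (ketbra state) = 1"
proof -
  have "mtrace (ketbra state) = (\<Sum>a<n. (amp * amp) * (cnj (v a) * v a))"
    using state_carrier by (simp add: mtrace_def ketbra_def state_index cnj_amp mult_ac)
  also have "\<dots> = 1"
    by (simp add: amp_mult_amp cnj_v_mult_v)
  finally show ?thesis .
qed

definition basis :: "(nat \<Rightarrow> bool) \<Rightarrow> complex vec" where "basis x = Zvec l x *\<^sub>v state"

lemma basis_carrier: "basis x \<in> carrier_vec n"
  unfolding basis_def by (rule mult_mat_vec_carrier[OF Zvec_carrier state_carrier])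

lemma dim_basis [simp]: "dim_vec (basis x) = n"
  using basis_carrier by simp

lemma basis_index: "a < n \<Longrightarrow> basis x $ a = chi l x a * amp * v a"
  using diagonal_mult_vec_index[OF diagonal_Zvec[of l x] Zvec_carrier[of l x] state_carrier, of a]
  by (simp add: basis_def Zvec_index state_index)

lemma sum_basis_outer:
  assumes "a < n" "b < n"
  shows "(\<Sum>x\<in>F2 l. basis x $ a * cnj (basis x $ b)) = (if a = b then 1 else 0)"
proof -
  have "(\<Sum>x\<in>F2 l. basis x $ a * cnj (basis x $ b))
      = (\<Sum>x\<in>F2 l. chi l x a * chi l x b * (amp * amp * (v a * cnj (v b))))"
    by (intro sum.cong refl) (simp add: basis_index assms cnj_chi cnj_amp mult_ac)
  also have "\<dots> = (\<Sum>x\<in>F2 l. chi l x (xor a b)) * (amp * amp * (v a * cnj (v b)))"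
    by (simp add: chi_mult sum_distrib_right)
  also have "\<dots> = (if a = b then 1 else 0)"
    using assms cnj_v_mult_v[of a]
    by (auto simp: sum_chi xor_less_power2 xor_eq_0_iff amp_mult_amp mult.commute)
  finally show ?thesis .
qed

lemma sum_basis4:
  assumes "a < n" "b < n" "c < n" "d < n"
  shows "(\<Sum>x\<in>F2 l. cnj (basis x $ c) * basis x $ d * basis x $ a * cnj (basis x $ b))
       = (if d = xor c (xor a b) then v a * cnj (v b) * cnj (v c) * v d / of_nat n else 0)"
proof -
  let ?u = "(amp * amp) * (amp * amp) * (v a * cnj (v b) * cnj (v c) * v d)"
  have "(\<Sum>x\<in>F2 l. cnj (basis x $ c) * basis x $ d * basis x $ a * cnj (basis x $ b))
      = (\<Sum>x\<in>F2 l. chi l x c * chi l x a * chi l x b * chi l x d * ?u)"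
    by (intro sum.cong refl) (simp add: basis_index assms cnj_chi cnj_amp mult_ac)
  also have "\<dots> = (\<Sum>x\<in>F2 l. chi l x c * chi l x a * chi l x b * chi l x d) * ?u"
    by (simp only: sum_distrib_right)
  also have "\<dots> = (if d = xor c (xor a b) then v a * cnj (v b) * cnj (v c) * v d / of_nat n else 0)"
    using assms by (simp add: sum_chi4 amp_mult_amp)
  finally show ?thesis .
qed

lemma sum_quad_form_basis:
  assumes "\<rho> \<in> carrier_mat n n"
  shows "(\<Sum>x\<in>F2 l. quad_form \<rho> (basis x)) = mtrace \<rho>"
proof -
  have "(\<Sum>x\<in>F2 l. quad_form \<rho> (basis x))
      = (\<Sum>x\<in>F2 l. \<Sum>c<n. \<Sum>d<n. \<rho> $$ (c, d) * (basis x $ d * cnj (basis x $ c)))"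
    by (simp add: quad_form_def mult_ac)
  also have "\<dots> = (\<Sum>c<n. \<Sum>d<n. \<Sum>x\<in>F2 l. \<rho> $$ (c, d) * (basis x $ d * cnj (basis x $ c)))"
    by (subst sum.swap) (rule sum.cong[OF refl], rule sum.swap)
  also have "\<dots> = mtrace \<rho>"
    using assms
    by (simp add: sum_basis_outer mtrace_def if_distrib flip: sum_distrib_left cong: if_cong)
  finally show ?thesis .
qed

lemma twirl_index:
  assumes \<rho>: "\<rho> \<in> carrier_mat n n" and ab: "a < n" "b < n"
  shows "twirl n (gen_group n generators) \<rho> $$ (a, b)
       = (\<Sum>c<n. v a * cnj (v b) * cnj (v c) * v (xor c (xor a b)) * \<rho> $$ (c, xor c (xor a b)))
         / of_nat n"
proof -
  have sandwich: "(conj_shift y * \<rho> * conj_shift y) $$ (a, b)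
      = v a * cnj (v (xor a y)) * \<rho> $$ (xor a y, xor b y) * v (xor b y) * cnj (v b)"
    if y: "y < n" for y
  proof -
    have "(conj_shift y * \<rho> * conj_shift y) $$ (a, b)
        = (conj_shift y * \<rho>) $$ (a, xor b y) * v (xor b y) * cnj (v b)"
      using conj_shift_carrier \<rho> ab y by (intro conj_shift_mult_index_right mult_carrier_mat) auto
    also have "(conj_shift y * \<rho>) $$ (a, xor b y) = v a * cnj (v (xor a y)) * \<rho> $$ (xor a y, xor b y)"
      using \<rho> ab y by (intro conj_shift_mult_index_left) (simp_all add: xor_less_power2)
    finally show ?thesis .
  qed
  have "twirl n (gen_group n generators) \<rho> $$ (a, b)
      = (\<Sum>s\<in>conj_shift ` {..<n}. (s * \<rho> * dag s) $$ (a, b)) / of_nat n"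
    using ab unfolding twirl_def card_gen_group unfolding gen_group_eq by simp
  also have "\<dots> = (\<Sum>y<n. (conj_shift y * \<rho> * conj_shift y) $$ (a, b)) / of_nat n"
    by (simp add: sum.reindex[OF inj_on_conj_shift] dag_conj_shift)
  also have "\<dots> = (\<Sum>y<n. v a * cnj (v (xor a y)) * \<rho> $$ (xor a y, xor b y) * v (xor b y) * cnj (v b))
                  / of_nat n"
    by (simp add: sandwich)
  also have "\<dots> = (\<Sum>c<n. v a * cnj (v c) * \<rho> $$ (c, xor b (xor a c)) * v (xor b (xor a c)) * cnj (v b))
                  / of_nat n"
    by (subst sum_reindex_xor[OF ab(1)]) simp
  finally show ?thesis
    by (simp add: xor.left_commute xor.commute mult_ac)
qed

lemma dephasing_index:
  assumes \<rho>: "\<rho> \<in> carrier_mat n n" and ab: "a < n" "b < n"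
  shows "msum n (\<lambda>x. quad_form \<rho> (basis x) \<cdot>\<^sub>m ketbra (basis x)) (F2 l) $$ (a, b)
       = (\<Sum>c<n. v a * cnj (v b) * cnj (v c) * v (xor c (xor a b)) * \<rho> $$ (c, xor c (xor a b)))
         / of_nat n"
proof -
  let ?w = "\<lambda>c d x. cnj (basis x $ c) * basis x $ d * basis x $ a * cnj (basis x $ b)"
  have "msum n (\<lambda>x. quad_form \<rho> (basis x) \<cdot>\<^sub>m ketbra (basis x)) (F2 l) $$ (a, b)
      = (\<Sum>x\<in>F2 l. \<Sum>c<n. \<Sum>d<n. \<rho> $$ (c, d) * ?w c d x)"
    using ab by (simp add: quad_form_def sum_distrib_left sum_distrib_right mult_ac)
  also have "\<dots> = (\<Sum>c<n. \<Sum>d<n. \<rho> $$ (c, d) * (\<Sum>x\<in>F2 l. ?w c d x))"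
    unfolding sum_distrib_left by (subst sum.swap) (rule sum.cong[OF refl], rule sum.swap)
  also have "\<dots> = (\<Sum>c<n. \<rho> $$ (c, xor c (xor a b))
                  * (v a * cnj (v b) * cnj (v c) * v (xor c (xor a b)) / of_nat n))"
    using ab by (simp add: sum_basis4 xor_less_power2 if_distrib cong: if_cong)
  finally show ?thesis
    by (simp add: sum_divide_distrib mult_ac)
qed

lemma twirl_dephases:
  assumes "\<rho> \<in> carrier_mat n n"
  shows "twirl n (gen_group n generators) \<rho>
       = msum n (\<lambda>x. quad_form \<rho> (basis x) \<cdot>\<^sub>m ketbra (basis x)) (F2 l)"
proof (rule eq_matI)
  fix a b
  assume "a < dim_row (msum n (\<lambda>x. quad_form \<rho> (basis x) \<cdot>\<^sub>m ketbra (basis x)) (F2 l))"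
    and "b < dim_col (msum n (\<lambda>x. quad_form \<rho> (basis x) \<cdot>\<^sub>m ketbra (basis x)) (F2 l))"
  then have "a < n" "b < n"
    by (simp_all add: msum_def)
  then show "twirl n (gen_group n generators) \<rho> $$ (a, b)
      = msum n (\<lambda>x. quad_form \<rho> (basis x) \<cdot>\<^sub>m ketbra (basis x)) (F2 l) $$ (a, b)"
    by (simp only: twirl_index dephasing_index assms)
qed (simp_all add: twirl_def msum_def)

lemma twirl_channel_output:
  assumes E: "quantum_channel l E"
  shows "\<exists>p :: (nat \<Rightarrow> bool) \<Rightarrow> real.
           (\<forall>x\<in>F2 l. 0 \<le> p x) \<and> (\<Sum>x\<in>F2 l. p x) = 1 \<and>
           twirl n (gen_group n generators) (E (ketbra state))
           = msum n (\<lambda>x. complex_of_real (p x) \<cdot>\<^sub>m (Zvec l x * ketbra state * dag (Zvec l x)))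
               (F2 l)"
proof -
  define \<rho> where "\<rho> = E (ketbra state)"
  have \<rho>_carrier: "\<rho> \<in> carrier_mat n n"
    unfolding \<rho>_def by (rule quantum_channel_carrier[OF E ketbra_carrier[OF state_carrier]])
  define p where "p x = Re (quad_form \<rho> (basis x))" for x
  have p: "quad_form \<rho> (basis x) = complex_of_real (p x)" and p_nonneg: "0 \<le> p x" for x
    using quantum_channel_pure_quad_form_nonneg[OF E state_carrier basis_carrier, of x]
    by (auto simp: p_def \<rho>_def)
  have "complex_of_real (\<Sum>x\<in>F2 l. p x) = mtrace \<rho>"
    by (simp add: p[symmetric] sum_quad_form_basis \<rho>_carrier)
  also have "\<dots> = 1"
    unfolding \<rho>_def using E state_carrier
    by (simp add: quantum_channel_trace ketbra_carrier mtrace_ketbra_state)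
  finally have p_sum: "(\<Sum>x\<in>F2 l. p x) = 1"
    by (rule of_real_eq_1_iff[THEN iffD1])
  have "Zvec l x * ketbra state * dag (Zvec l x) = ketbra (basis x)" for x
    unfolding basis_def using Zvec_carrier state_carrier by (rule sandwich_ketbra)
  then have "twirl n (gen_group n generators) \<rho>
      = msum n (\<lambda>x. complex_of_real (p x) \<cdot>\<^sub>m (Zvec l x * ketbra state * dag (Zvec l x))) (F2 l)"
    using twirl_dephases[OF \<rho>_carrier] by (simp add: p)
  then show ?thesis
    using p_nonneg p_sum unfolding \<rho>_def by blast
qed

end

theorem proposition5:
  fixes l :: nat and V :: "complex mat" and E :: "complex mat \<Rightarrow> complex mat"
  assumes "V \<in> clifford l 3"
    and "diagonal_mat V"
    and "quantum_channel l E"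
  shows "\<exists>p :: (nat \<Rightarrow> bool) \<Rightarrow> real.
           (\<forall>x\<in>F2 l. 0 \<le> p x) \<and> (\<Sum>x\<in>F2 l. p x) = 1 \<and>
           twirl (2 ^ l) (gen_group (2 ^ l) {V * Xq l i * dag V | i. i < l})
                 (E (ketbra (V *\<^sub>v plus_state l)))
           = msum (2 ^ l) (\<lambda>x. complex_of_real (p x) \<cdot>\<^sub>m
                 (Zvec l x * ketbra (V *\<^sub>v plus_state l) * dag (Zvec l x))) (F2 l)"
proof -
  interpret diagonal_unitary l V
    using assms(1,2) by unfold_locales (simp add: numeral_3_eq_3)
  show ?thesis
    using twirl_channel_output[OF assms(3)] unfolding state_def .
qed

end
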